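(* Let $f:\mathbb{N}\to[0,\infty)$ satisfy $\sum_{n\ge1}f(n)<\infty$, let $(\lambda_n)_{n\in\mathbb{N}}$ be a sequence of positive real numbers, and define $F(x):=\sum_{n\ge1}f(n)e(\lambda_n x)$. Let $\beta\in\left(-\frac{\pi}{2},\frac{\pi}{2}\right)$, let $0<r<1$, and let $\mathcal{M}\subset\mathbb{N}$ be a finite set. Define $$R(t):=\prod_{m\in\mathcal{M}}\left(1-re(\lambda_m t)\right)^{-1}.$$ Let $K\in L^1(\mathbb{R})$ be a real-valued function with $\mathrm{supp}(K)\subset[0,\infty)$ such that, for some positive constant $\delta$ and all $\xi\in\mathbb{R}$, $$\mathrm{Re}\left(e^{i\beta}\widehat{K}(\xi)\right)\ge\delta\cdot\mathrm{Re}\left(\widehat{K}(\xi)\right)\ge0.$$ Then for all real numbers $T\ge1$, $$\int_0^\infty\mathrm{Re}\left(e^{i\beta}F(x)\right)|R(x)|^2K\left(\frac{x}{T}\right)dx\ \ge\ \delta r\left(\sum_{m\in\mathcal{M}}f(m)\right)\int_0^\infty|R(x)|^2K\left(\frac{x}{T}\right)dx.$$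
   Context: Here $e(t):=e^{2\pi i t}$, and the Fourier transform is normalized as $\widehat{K}(\xi)=\int_{\mathbb{R}}K(x)e(-\xi x)\,dx$. *)

theory Defs
  imports "HOL-Analysis.Analysis"
begin

definition e :: "real \<Rightarrow> complex" where
  "e t = exp (2 * of_real pi * \<i> * of_real t)"

definition fourier :: "(real \<Rightarrow> real) \<Rightarrow> real \<Rightarrow> complex" where
  "fourier K \<xi> = (LINT x|lborel. of_real (K x) * e (- \<xi> * x))"

end

theory Submission
  imports Defs
begin

(*
  Call G a nonneg_trig_limit if it is a bounded pointwise limit of trigonometric polynomials
  sum_j a_j e(nu_j x) with a_j >= 0 and arbitrary real frequencies nu_j.  These functions are
  closed under sums, products and conjugation, and contain every factor
  (1 - r e(lambda t))^(-1) = sum_k r^k e(k lambda t); hence |R|^2 = R cnj R is one of them.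
  Integrating e(nu x) against K(x/T) gives T hat K(-nu T), which by hypothesis lies in the closed
  convex cone {z. delta Re z <= Re (e^(i beta) z) and 0 <= delta Re z}; by linearity and dominated
  convergence, so does the integral of any nonneg_trig_limit against K(x/T).
  For m in M, multiplying cnj (1 - r e(lambda_m x))^(-1) by e(lambda_m x) gives r times it plus
  e(lambda_m x), so F |R|^2 = r (sum_{m in M} f m) |R|^2 + G with G again a nonneg_trig_limit,
  and the cone inequalities for |R|^2 and for G yield the bound.
*)

lemma e_add: "e (s + t) = e s * e t"
  unfolding e_def by (simp add: exp_add[symmetric] algebra_simps)

lemma norm_e [simp]: "cmod (e t) = 1"
  unfolding e_def by (simp add: norm_exp_eq_Re)

lemma cnj_e: "cnj (e t) = e (- t)"
  unfolding e_def by (simp add: exp_cnj)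

lemma e_power: "e t ^ k = e (real k * t)"
  by (induction k) (auto simp: e_def exp_add[symmetric] algebra_simps)

lemma continuous_on_e [continuous_intros]:
  "continuous_on S f \<Longrightarrow> continuous_on S (\<lambda>x. e (f x))"
  unfolding e_def by (intro continuous_intros)

inductive nonneg_trig_poly :: "(real \<Rightarrow> complex) \<Rightarrow> bool" where
  char: "a \<ge> 0 \<Longrightarrow> nonneg_trig_poly (\<lambda>x. of_real a * e (\<nu> * x))"
| add: "nonneg_trig_poly p \<Longrightarrow> nonneg_trig_poly q \<Longrightarrow> nonneg_trig_poly (\<lambda>x. p x + q x)"

lemma nonneg_trig_poly_const: "a \<ge> 0 \<Longrightarrow> nonneg_trig_poly (\<lambda>x. of_real a)"
  using nonneg_trig_poly.char[of a 0] by (simp add: e_def)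

lemma nonneg_trig_poly_sum:
  "finite S \<Longrightarrow> (\<And>i. i \<in> S \<Longrightarrow> nonneg_trig_poly (p i)) \<Longrightarrow> nonneg_trig_poly (\<lambda>x. \<Sum>i\<in>S. p i x)"
  by (induction S rule: finite_induct)
     (auto intro: nonneg_trig_poly.add nonneg_trig_poly_const[of 0, simplified])

lemma nonneg_trig_poly_mult:
  assumes "nonneg_trig_poly p" "nonneg_trig_poly q"
  shows "nonneg_trig_poly (\<lambda>x. p x * q x)"
  using assms
proof (induction arbitrary: q)
  case (char a \<nu>)
  from char.prems show ?case
  proof induction
    case (char b \<mu>)
    have "nonneg_trig_poly (\<lambda>x. of_real (a * b) * e ((\<nu> + \<mu>) * x))"
      using \<open>a \<ge> 0\<close> \<open>b \<ge> 0\<close> by (intro nonneg_trig_poly.char) simp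
    then show ?case by (simp add: e_add algebra_simps)
  next
    case (add q1 q2)
    then show ?case by (simp add: distrib_left nonneg_trig_poly.add)
  qed
next
  case (add p1 p2)
  then show ?case by (simp add: distrib_right nonneg_trig_poly.add)
qed

lemma nonneg_trig_poly_cnj: "nonneg_trig_poly p \<Longrightarrow> nonneg_trig_poly (\<lambda>x. cnj (p x))"
proof (induction rule: nonneg_trig_poly.induct)
  case (char a \<nu>)
  then show ?case using nonneg_trig_poly.char[of a "- \<nu>"] by (simp add: cnj_e)
qed (simp add: nonneg_trig_poly.add)

lemma nonneg_trig_poly_continuous: "nonneg_trig_poly p \<Longrightarrow> continuous_on UNIV p"
  by (induction rule: nonneg_trig_poly.induct) (auto intro!: continuous_intros)

lemma nonneg_trig_poly_bounded: "nonneg_trig_poly p \<Longrightarrow> \<exists>B. \<forall>x. cmod (p x) \<le> B"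
proof (induction rule: nonneg_trig_poly.induct)
  case (char a \<nu>)
  then show ?case by (auto simp: norm_mult)
next
  case (add p q)
  then obtain B C where "\<forall>x. cmod (p x) \<le> B" "\<forall>x. cmod (q x) \<le> C" by blast
  then have "\<forall>x. cmod (p x + q x) \<le> B + C" by (metis add_mono norm_triangle_le)
  then show ?case by blast
qed

definition nonneg_trig_limit :: "(real \<Rightarrow> complex) \<Rightarrow> bool" where
  "nonneg_trig_limit G \<longleftrightarrow> (\<exists>p B. (\<forall>N. nonneg_trig_poly (p N)) \<and> (\<forall>N x. cmod (p N x) \<le> B)
      \<and> (\<forall>x. (\<lambda>N. p N x) \<longlonglongrightarrow> G x))"

lemma nonneg_trig_limitI:
  assumes "\<And>N. nonneg_trig_poly (p N)" "\<And>N x. cmod (p N x) \<le> B" "\<And>x. (\<lambda>N. p N x) \<longlonglongrightarrow> G x"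
  shows "nonneg_trig_limit G"
  using assms unfolding nonneg_trig_limit_def by blast

lemma nonneg_trig_limitE:
  assumes "nonneg_trig_limit G"
  obtains p B where "\<And>N. nonneg_trig_poly (p N)" "\<And>N x. cmod (p N x) \<le> B" "B \<ge> 0"
    "\<And>x. (\<lambda>N. p N x) \<longlonglongrightarrow> G x"
proof -
  from assms obtain p B where p: "\<forall>N. nonneg_trig_poly (p N)" "\<forall>N x. cmod (p N x) \<le> B"
    "\<forall>x. (\<lambda>N. p N x) \<longlonglongrightarrow> G x"
    unfolding nonneg_trig_limit_def by blast
  moreover have "B \<ge> 0" using p(2) norm_ge_zero order_trans by blast
  ultimately show ?thesis using that by blast
qed

lemma nonneg_trig_limit_add:
  assumes "nonneg_trig_limit G" "nonneg_trig_limit H"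
  shows "nonneg_trig_limit (\<lambda>x. G x + H x)"
proof -
  obtain p B where p: "\<And>N. nonneg_trig_poly (p N)" "\<And>N x. cmod (p N x) \<le> B" "B \<ge> 0"
    "\<And>x. (\<lambda>N. p N x) \<longlonglongrightarrow> G x" using assms(1) by (rule nonneg_trig_limitE) blast
  obtain q C where q: "\<And>N. nonneg_trig_poly (q N)" "\<And>N x. cmod (q N x) \<le> C" "C \<ge> 0"
    "\<And>x. (\<lambda>N. q N x) \<longlonglongrightarrow> H x" using assms(2) by (rule nonneg_trig_limitE) blast
  show ?thesis
  proof (rule nonneg_trig_limitI[where p = "\<lambda>N x. p N x + q N x" and B = "B + C"])
    show "cmod (p N x + q N x) \<le> B + C" for N x
      using norm_triangle_ineq[of "p N x" "q N x"] p(2)[of N x] q(2)[of N x] by linarith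
  qed (use p q in \<open>auto intro: nonneg_trig_poly.add tendsto_add\<close>)
qed

lemma nonneg_trig_limit_mult:
  assumes "nonneg_trig_limit G" "nonneg_trig_limit H"
  shows "nonneg_trig_limit (\<lambda>x. G x * H x)"
proof -
  obtain p B where p: "\<And>N. nonneg_trig_poly (p N)" "\<And>N x. cmod (p N x) \<le> B" "B \<ge> 0"
    "\<And>x. (\<lambda>N. p N x) \<longlonglongrightarrow> G x" using assms(1) by (rule nonneg_trig_limitE) blast
  obtain q C where q: "\<And>N. nonneg_trig_poly (q N)" "\<And>N x. cmod (q N x) \<le> C" "C \<ge> 0"
    "\<And>x. (\<lambda>N. q N x) \<longlonglongrightarrow> H x" using assms(2) by (rule nonneg_trig_limitE) blast
  show ?thesis
  proof (rule nonneg_trig_limitI[where p = "\<lambda>N x. p N x * q N x" and B = "B * C"])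
    show "cmod (p N x * q N x) \<le> B * C" for N x
      unfolding norm_mult using p(2,3) q(2) by (intro mult_mono) auto
  qed (use p q in \<open>auto intro: nonneg_trig_poly_mult tendsto_mult\<close>)
qed

lemma nonneg_trig_limit_cnj:
  assumes "nonneg_trig_limit G"
  shows "nonneg_trig_limit (\<lambda>x. cnj (G x))"
proof -
  obtain p B where p: "\<And>N. nonneg_trig_poly (p N)" "\<And>N x. cmod (p N x) \<le> B" "B \<ge> 0"
    "\<And>x. (\<lambda>N. p N x) \<longlonglongrightarrow> G x" using assms by (rule nonneg_trig_limitE) blast
  then show ?thesis
    by (intro nonneg_trig_limitI[where p = "\<lambda>N x. cnj (p N x)" and B = B])
       (auto intro: nonneg_trig_poly_cnj tendsto_cnj)
qed

lemma nonneg_trig_limit_poly: "nonneg_trig_poly p \<Longrightarrow> nonneg_trig_limit p"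
  using nonneg_trig_poly_bounded[of p] by (auto intro: nonneg_trig_limitI[where p = "\<lambda>N. p"])

lemma nonneg_trig_limit_sum:
  "finite S \<Longrightarrow> (\<And>i. i \<in> S \<Longrightarrow> nonneg_trig_limit (G i)) \<Longrightarrow> nonneg_trig_limit (\<lambda>x. \<Sum>i\<in>S. G i x)"
proof (induction S rule: finite_induct)
  case empty
  show ?case using nonneg_trig_limit_poly[OF nonneg_trig_poly_const[of 0]] by simp
qed (simp add: nonneg_trig_limit_add)

lemma nonneg_trig_limit_prod:
  "finite S \<Longrightarrow> (\<And>i. i \<in> S \<Longrightarrow> nonneg_trig_limit (G i)) \<Longrightarrow> nonneg_trig_limit (\<lambda>x. \<Prod>i\<in>S. G i x)"
proof (induction S rule: finite_induct)
  case empty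
  show ?case using nonneg_trig_limit_poly[OF nonneg_trig_poly_const[of 1]] by simp
qed (simp add: nonneg_trig_limit_mult)

lemma nonneg_trig_limit_series:
  assumes a: "\<And>n. a n \<ge> 0" "summable a"
  shows "nonneg_trig_limit (\<lambda>x. \<Sum>n. of_real (a n) * e (\<mu> n * x))"
proof (rule nonneg_trig_limitI)
  show "nonneg_trig_poly (\<lambda>x. \<Sum>n<N. of_real (a n) * e (\<mu> n * x))" for N
    using a by (intro nonneg_trig_poly_sum nonneg_trig_poly.char) auto
  show "cmod (\<Sum>n<N. of_real (a n) * e (\<mu> n * x)) \<le> suminf a" for N x
  proof -
    have "cmod (\<Sum>n<N. of_real (a n) * e (\<mu> n * x)) \<le> (\<Sum>n<N. a n)"
      by (rule order_trans[OF norm_sum]) (simp add: norm_mult a)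
    also have "\<dots> \<le> suminf a" using a by (intro sum_le_suminf) auto
    finally show ?thesis .
  qed
  show "(\<lambda>N. \<Sum>n<N. of_real (a n) * e (\<mu> n * x)) \<longlonglongrightarrow> (\<Sum>n. of_real (a n) * e (\<mu> n * x))" for x
  proof -
    have "summable (\<lambda>n. norm (of_real (a n) * e (\<mu> n * x)))"
      using a by (simp add: norm_mult)
    then show ?thesis by (rule summable_LIMSEQ[OF summable_norm_cancel])
  qed
qed

lemma nonneg_trig_limit_geometric:
  assumes "0 \<le> r" "r < 1"
  shows "nonneg_trig_limit (\<lambda>x. inverse (1 - of_real r * e (\<nu> * x)))"
proof -
  have "(\<lambda>k. of_real (r ^ k) * e (real k * \<nu> * x)) sums inverse (1 - of_real r * e (\<nu> * x))" for x
  proof -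
    have "norm (of_real r * e (\<nu> * x)) < 1" using assms by (simp add: norm_mult)
    from geometric_sums[OF this] show ?thesis
      by (simp add: power_mult_distrib e_power mult.assoc divide_inverse)
  qed
  then have "(\<lambda>x. inverse (1 - of_real r * e (\<nu> * x))) = (\<lambda>x. \<Sum>k. of_real (r ^ k) * e (real k * \<nu> * x))"
    by (auto simp: sums_iff)
  moreover have "nonneg_trig_limit (\<lambda>x. \<Sum>k. of_real (r ^ k) * e (real k * \<nu> * x))"
    using assms by (intro nonneg_trig_limit_series) auto
  ultimately show ?thesis by simp
qed

lemma nonneg_trig_limit_prod_geometric:
  "finite M \<Longrightarrow> 0 \<le> r \<Longrightarrow> r < 1
    \<Longrightarrow> nonneg_trig_limit (\<lambda>x. \<Prod>m\<in>M. inverse (1 - of_real r * e (\<nu> m * x)))"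
  by (intro nonneg_trig_limit_prod nonneg_trig_limit_geometric)

lemma nonneg_trig_limit_bounded: "nonneg_trig_limit G \<Longrightarrow> \<exists>B. \<forall>x. cmod (G x) \<le> B"
  unfolding nonneg_trig_limit_def by (metis LIMSEQ_le_const2 tendsto_norm)

lemma nonneg_trig_limit_measurable:
  assumes "nonneg_trig_limit G"
  shows "G \<in> borel_measurable borel"
proof -
  obtain p B where p: "\<And>N. nonneg_trig_poly (p N)" "\<And>N x. cmod (p N x) \<le> B" "B \<ge> 0"
    "\<And>x. (\<lambda>N. p N x) \<longlonglongrightarrow> G x" using assms by (rule nonneg_trig_limitE) blast
  show ?thesis
    by (rule borel_measurable_LIMSEQ_metric[OF borel_measurable_continuous_onI p(4)])
       (rule nonneg_trig_poly_continuous[OF p(1)])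
qed

definition positivity_cone :: "real \<Rightarrow> real \<Rightarrow> complex set" where
  "positivity_cone \<beta> \<delta> = {z. \<delta> * Re z \<le> Re (exp (\<i> * of_real \<beta>) * z) \<and> 0 \<le> \<delta> * Re z}"

lemma closed_positivity_cone: "closed (positivity_cone \<beta> \<delta>)"
  unfolding positivity_cone_def Collect_conj_eq
  by (intro closed_Int closed_Collect_le continuous_intros)

lemma convex_cone_positivity_cone: "convex_cone (positivity_cone \<beta> \<delta>)"
  unfolding convex_cone_iff
proof (intro conjI ballI allI impI)
  fix z w
  assume "z \<in> positivity_cone \<beta> \<delta>" "w \<in> positivity_cone \<beta> \<delta>"
  then show "z + w \<in> positivity_cone \<beta> \<delta>"
    by (auto simp: positivity_cone_def distrib_left)
next
  fix z and c :: real
  assume "z \<in> positivity_cone \<beta> \<delta>" and c: "c \<ge> 0"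
  then have z: "\<delta> * Re z \<le> Re (exp (\<i> * of_real \<beta>) * z)" "0 \<le> \<delta> * Re z"
    unfolding positivity_cone_def by auto
  have "Re (exp (\<i> * of_real \<beta>) * (c *\<^sub>R z)) = c * Re (exp (\<i> * of_real \<beta>) * z)"
    by (simp only: mult_scaleR_right scaleR_complex.sel)
  moreover have "\<delta> * Re (c *\<^sub>R z) = c * (\<delta> * Re z)" by simp
  ultimately show "c *\<^sub>R z \<in> positivity_cone \<beta> \<delta>"
    unfolding positivity_cone_def mem_Collect_eq
    using mult_left_mono[OF z(1) c] mult_nonneg_nonneg[OF c z(2)] by presburger
qed (simp add: positivity_cone_def)

context
  fixes K :: "real \<Rightarrow> real" and T :: real
  assumes K: "integrable lborel K" and T: "T > 0"
begin

lemma integrable_dilated: "integrable lborel (\<lambda>x. K (x / T))"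
  using lborel_integrable_real_affine[OF K, of "1 / T" 0] T by simp

lemma integrable_bounded_mult_dilated:
  assumes [measurable]: "G \<in> borel_measurable borel" and G: "\<And>x. cmod (G x) \<le> B"
  shows "integrable lborel (\<lambda>x. G x * of_real (K (x / T)))"
proof (rule Bochner_Integration.integrable_bound)
  show "integrable lborel (\<lambda>x. B * K (x / T))" using integrable_dilated by simp
  show "(\<lambda>x. G x * of_real (K (x / T))) \<in> borel_measurable lborel"
    using borel_measurable_integrable[OF integrable_dilated] by simp
  show "AE x in lborel. norm (G x * of_real (K (x / T))) \<le> norm (B * K (x / T))"
  proof (intro AE_I2)
    fix x
    have "cmod (G x) * \<bar>K (x / T)\<bar> \<le> \<bar>B\<bar> * \<bar>K (x / T)\<bar>"
      using G[of x] by (intro mult_right_mono) auto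
    then show "norm (G x * of_real (K (x / T))) \<le> norm (B * K (x / T))"
      by (simp add: norm_mult abs_mult)
  qed
qed

lemma integral_e_mult_dilated:
  "(LINT x|lborel. e (\<nu> * x) * of_real (K (x / T))) = of_real T * fourier K (- \<nu> * T)"
proof -
  have "(LINT x|lborel. e (\<nu> * x) * of_real (K (x / T)))
      = \<bar>T\<bar> *\<^sub>R (LINT x|lborel. e (\<nu> * (0 + T * x)) * of_real (K ((0 + T * x) / T)))"
    by (rule lborel_integral_real_affine) (use T in simp)
  also have "(\<lambda>x. e (\<nu> * (0 + T * x)) * of_real (K ((0 + T * x) / T)))
      = (\<lambda>x. of_real (K x) * e (- (- \<nu> * T) * x))"
    using T by (auto simp: algebra_simps)
  finally show ?thesis using T by (simp add: fourier_def scaleR_conv_of_real)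
qed

lemma integrable_nonneg_trig_limit_mult_dilated:
  "nonneg_trig_limit G \<Longrightarrow> integrable lborel (\<lambda>x. G x * of_real (K (x / T)))"
  using nonneg_trig_limit_bounded nonneg_trig_limit_measurable integrable_bounded_mult_dilated
  by blast

lemma integral_nonneg_trig_poly_mult_dilated_mem:
  assumes C: "convex_cone C" "\<And>\<xi>. fourier K \<xi> \<in> C" and p: "nonneg_trig_poly p"
  shows "(LINT x|lborel. p x * of_real (K (x / T))) \<in> C"
  using p
proof induction
  case (char a \<nu>)
  have "(LINT x|lborel. of_real a * e (\<nu> * x) * of_real (K (x / T))) = (a * T) *\<^sub>R fourier K (- \<nu> * T)"
    by (simp add: mult.assoc integral_e_mult_dilated scaleR_conv_of_real)
  also have "\<dots> \<in> C" using C char T by (intro convex_cone_scaleR) auto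
  finally show ?case .
next
  case (add p q)
  have "(LINT x|lborel. (p x + q x) * of_real (K (x / T)))
      = (LINT x|lborel. p x * of_real (K (x / T))) + (LINT x|lborel. q x * of_real (K (x / T)))"
    using add.hyps
    by (simp add: distrib_right integrable_nonneg_trig_limit_mult_dilated nonneg_trig_limit_poly)
  then show ?case using add.IH C by (simp add: convex_cone_add)
qed

lemma integral_nonneg_trig_limit_mult_dilated_mem:
  assumes C: "convex_cone C" "closed C" "\<And>\<xi>. fourier K \<xi> \<in> C" and G: "nonneg_trig_limit G"
  shows "(LINT x|lborel. G x * of_real (K (x / T))) \<in> C"
proof -
  obtain p B where p: "\<And>N. nonneg_trig_poly (p N)" "\<And>N x. cmod (p N x) \<le> B" "B \<ge> 0"
    "\<And>x. (\<lambda>N. p N x) \<longlonglongrightarrow> G x" using G by (rule nonneg_trig_limitE) blast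
  have [measurable]: "G \<in> borel_measurable borel"
    using nonneg_trig_limit_measurable[OF G] .
  have "(\<lambda>N. LINT x|lborel. p N x * of_real (K (x / T))) \<longlonglongrightarrow> (LINT x|lborel. G x * of_real (K (x / T)))"
  proof (rule integral_dominated_convergence[where w = "\<lambda>x. B * \<bar>K (x / T)\<bar>"])
    show "integrable lborel (\<lambda>x. B * \<bar>K (x / T)\<bar>)" using integrable_dilated by simp
    show "AE x in lborel. (\<lambda>N. p N x * of_real (K (x / T))) \<longlonglongrightarrow> G x * of_real (K (x / T))"
      by (intro AE_I2 tendsto_mult[OF p(4) tendsto_const])
    show "AE x in lborel. norm (p N x * of_real (K (x / T))) \<le> B * \<bar>K (x / T)\<bar>" for N
      using p(2) by (intro AE_I2) (auto simp: norm_mult intro: mult_right_mono)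
    show "(\<lambda>x. p N x * of_real (K (x / T))) \<in> borel_measurable lborel" for N
      using borel_measurable_continuous_onI[OF nonneg_trig_poly_continuous[OF p(1)]]
        borel_measurable_integrable[OF integrable_dilated] by simp
  qed (use borel_measurable_integrable[OF integrable_dilated] in simp)
  then show ?thesis
    by (rule closed_sequentially[OF C(2), rotated])
       (rule integral_nonneg_trig_poly_mult_dilated_mem[OF C(1,3) p(1)])
qed

lemma set_integral_atLeast_0_dilated:
  assumes "closure {x. K x \<noteq> 0} \<subseteq> {0..}"
  shows "(LINT x:{0..}|lborel. h x * K (x / T)) = (LINT x|lborel. h x * K (x / T))"
proof -
  have "K (x / T) = 0" if "x < 0" for x
  proof -
    have "x / T \<notin> {0..}" using divide_neg_pos[OF that T] by simp
    then have "x / T \<notin> closure {x. K x \<noteq> 0}" using assms by (meson subsetD)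
    then have "x / T \<notin> {x. K x \<noteq> 0}" by (meson closure_subset subsetD)
    then show ?thesis by simp
  qed
  then show ?thesis
    unfolding set_lebesgue_integral_def
    by (intro Bochner_Integration.integral_cong) (auto simp: indicator_def)
qed

lemma integral_Re_mult_dilated:
  assumes "integrable lborel (\<lambda>x. H x * of_real (K (x / T)))"
  shows "(LINT x|lborel. Re (c * H x) * K (x / T)) = Re (c * (LINT x|lborel. H x * of_real (K (x / T))))"
  using integral_bounded_linear[OF bounded_linear_compose[OF bounded_linear_Re
      bounded_linear_mult_right[of c]] assms]
  by (simp add: o_def algebra_simps)

lemma set_integral_Re_exp_mult_ge:
  assumes K_hat: "\<And>\<xi>. fourier K \<xi> \<in> positivity_cone \<beta> \<delta>"
    and K_supp: "closure {x. K x \<noteq> 0} \<subseteq> {0..}"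
    and W: "nonneg_trig_limit (\<lambda>x. of_real (W x))" and G: "nonneg_trig_limit G" and "c \<ge> 0"
    and HW: "\<And>x. H x * of_real (W x) = of_real c * of_real (W x) + G x"
  shows "c * \<delta> * (LINT x:{0..}|lborel. W x * K (x / T))
      \<le> (LINT x:{0..}|lborel. Re (exp (\<i> * of_real \<beta>) * H x) * W x * K (x / T))"
proof -
  define J :: "(real \<Rightarrow> complex) \<Rightarrow> complex" where "J h = (LINT x|lborel. h x * of_real (K (x / T)))" for h
  define \<omega> where "\<omega> = exp (\<i> * of_real \<beta>)"
  have HW_lim: "nonneg_trig_limit (\<lambda>x. H x * of_real (W x))"
    unfolding HW using \<open>c \<ge> 0\<close>
    by (intro nonneg_trig_limit_add nonneg_trig_limit_mult nonneg_trig_limit_poly nonneg_trig_poly_const W G)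
  note integrable = integrable_nonneg_trig_limit_mult_dilated
  have W_int: "(LINT x:{0..}|lborel. W x * K (x / T)) = Re (J (\<lambda>x. of_real (W x)))"
    unfolding set_integral_atLeast_0_dilated[OF K_supp] J_def by (simp flip: of_real_mult)
  have Re_HW: "Re (\<omega> * (H x * of_real (W x))) = Re (\<omega> * H x) * W x" for x
    by (simp add: algebra_simps)
  have HW_int: "(LINT x:{0..}|lborel. Re (\<omega> * H x) * W x * K (x / T)) = Re (\<omega> * J (\<lambda>x. H x * of_real (W x)))"
    unfolding set_integral_atLeast_0_dilated[OF K_supp] J_def
      integral_Re_mult_dilated[OF integrable[OF HW_lim], symmetric] Re_HW ..
  note cone_mem = integral_nonneg_trig_limit_mult_dilated_mem[OF convex_cone_positivity_cone
      closed_positivity_cone K_hat]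
  have "J (\<lambda>x. H x * of_real (W x)) = of_real c * J (\<lambda>x. of_real (W x)) + J G"
    unfolding J_def HW using integrable[OF W] integrable[OF G]
    by (simp add: distrib_right mult.assoc)
  then have "Re (\<omega> * J (\<lambda>x. H x * of_real (W x)))
      = c * Re (\<omega> * J (\<lambda>x. of_real (W x))) + Re (\<omega> * J G)"
    by (simp add: algebra_simps)
  moreover have JW: "\<delta> * Re (J (\<lambda>x. of_real (W x))) \<le> Re (\<omega> * J (\<lambda>x. of_real (W x)))"
    and "0 \<le> Re (\<omega> * J G)"
    using cone_mem[OF W] cone_mem[OF G] unfolding J_def \<omega>_def positivity_cone_def by auto
  moreover note mult_left_mono[OF JW \<open>c \<ge> 0\<close>]
  ultimately show ?thesis
    unfolding W_int HW_int \<omega>_def[symmetric] by (simp only: mult.assoc)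
qed

end

lemma mult_cnj_inverse_one_minus:
  assumes "cmod u = 1" "0 \<le> r" "r < 1"
  shows "u * cnj (inverse (1 - of_real r * u)) = of_real r * cnj (inverse (1 - of_real r * u)) + u"
proof -
  define d where "d = 1 - of_real r * cnj u"
  have "cmod (of_real r * cnj u) < 1" using assms by (simp add: norm_mult)
  then have "d \<noteq> 0" unfolding d_def by auto
  have "u * cnj u = 1" using assms by (metis complex_norm_square of_real_1 power_one)
  then have "u = u * d + of_real r" unfolding d_def by (simp add: algebra_simps)
  then have "u * inverse d = of_real r * inverse d + u" using \<open>d \<noteq> 0\<close>
    by (metis (no_types, lifting) add.commute distrib_right right_inverse mult.right_neutral mult.assoc)
  then show ?thesis unfolding d_def by simp
qed

lemma mult_norm_square_geometric_factor:
  assumes "cmod u = 1" "0 \<le> r" "r < 1" "z = inverse (1 - of_real r * u) * w"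
  shows "u * (z * cnj z) = of_real r * (z * cnj z) + u * z * cnj w"
proof -
  have "u * (z * cnj z) = z * (u * cnj (inverse (1 - of_real r * u))) * cnj w"
    using assms(4) by (simp add: ac_simps)
  also have "\<dots> = of_real r * (z * cnj z) + u * z * cnj w"
    unfolding mult_cnj_inverse_one_minus[OF assms(1-3)] using assms(4) by (simp add: algebra_simps)
  finally show ?thesis .
qed

lemma suminf_Suc_split_finite:
  fixes c :: "nat \<Rightarrow> 'a::real_normed_vector"
  assumes "summable (\<lambda>n. c (Suc n))" "finite M" "M \<subseteq> {1..}"
  shows "(\<Sum>n. c (Suc n)) = (\<Sum>n. if Suc n \<in> M then 0 else c (Suc n)) + (\<Sum>m\<in>M. c m)"
proof -
  define A where "A = {n. Suc n \<in> M}"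
  have "M = Suc ` A"
  proof (intro equalityI subsetI)
    fix m assume "m \<in> M"
    moreover have "m = Suc (m - 1)" using \<open>m \<in> M\<close> assms(3) by auto
    ultimately show "m \<in> Suc ` A" unfolding A_def by (metis (mono_tags) imageI mem_Collect_eq)
  qed (auto simp: A_def)
  then have "(\<Sum>n\<in>A. c (Suc n)) = (\<Sum>m\<in>M. c m)"
    by (simp add: sum.reindex)
  moreover have "finite A"
    using finite_vimageI[OF assms(2), of Suc] by (simp add: A_def vimage_def)
  ultimately have "(\<lambda>n. if Suc n \<in> M then 0 else c (Suc n)) sums ((\<Sum>n. c (Suc n)) - (\<Sum>m\<in>M. c m))"
    using summable_sums[OF assms(1)] sums_If_finite_set'[where A = A and f = "\<lambda>_. 0" and g = "\<lambda>n. c (Suc n)"]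
    by (auto simp: A_def sum_negf)
  then show ?thesis by (simp add: sums_iff)
qed

lemma series_mult_norm_square_decomposition:
  fixes f lam :: "nat \<Rightarrow> real" and r :: real and M :: "nat set" and F R :: "real \<Rightarrow> complex"
  assumes f: "\<And>n. n \<ge> 1 \<Longrightarrow> f n \<ge> 0" "summable (\<lambda>n. f (Suc n))"
    and F: "\<And>x. F x = (\<Sum>n. of_real (f (Suc n)) * e (lam (Suc n) * x))"
    and r: "0 \<le> r" "r < 1"
    and M: "finite M" "M \<subseteq> {1..}"
    and R: "\<And>t. R t = (\<Prod>m\<in>M. inverse (1 - of_real r * e (lam m * t)))"
  obtains G where "nonneg_trig_limit G"
    "\<And>x. F x * (R x * cnj (R x)) = of_real (r * (\<Sum>m\<in>M. f m)) * (R x * cnj (R x)) + G x"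
proof -
  define R' where "R' m x = (\<Prod>k\<in>M - {m}. inverse (1 - of_real r * e (lam k * x)))" for m x
  define a where "a n = (if Suc n \<in> M then 0 else f (Suc n))" for n
  define F' where "F' x = (\<Sum>n. of_real (a n) * e (lam (Suc n) * x))" for x
  define G where "G x = F' x * (R x * cnj (R x))
      + (\<Sum>m\<in>M. of_real (f m) * e (lam m * x) * R x * cnj (R' m x))" for x
  have "R = (\<lambda>x. \<Prod>m\<in>M. inverse (1 - of_real r * e (lam m * x)))" using R by auto
  then have R_lim: "nonneg_trig_limit R"
    using M(1) r by (simp add: nonneg_trig_limit_prod_geometric)
  have a: "a n \<ge> 0" "a n \<le> f (Suc n)" for n using f(1) by (auto simp: a_def)
  have "summable a" by (rule summable_comparison_test'[OF f(2)]) (use a in auto)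
  then have "nonneg_trig_limit F'" unfolding F'_def by (intro nonneg_trig_limit_series a(1))
  moreover have "nonneg_trig_limit (\<lambda>x. of_real (f m) * e (lam m * x) * R x * cnj (R' m x))"
    if "m \<in> M" for m
  proof -
    have "nonneg_trig_limit (\<lambda>x. of_real (f m) * e (lam m * x))"
      using that M(2) f(1) by (intro nonneg_trig_limit_poly nonneg_trig_poly.char) auto
    moreover have "nonneg_trig_limit (R' m)"
      unfolding R'_def using M(1) r by (intro nonneg_trig_limit_prod_geometric) auto
    ultimately show ?thesis
      by (rule nonneg_trig_limit_mult[OF nonneg_trig_limit_mult[OF _ R_lim] nonneg_trig_limit_cnj])
  qed
  ultimately have "nonneg_trig_limit G"
    unfolding G_def using M(1)
    by (intro nonneg_trig_limit_add nonneg_trig_limit_sum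
          nonneg_trig_limit_mult[OF _ nonneg_trig_limit_mult[OF R_lim nonneg_trig_limit_cnj[OF R_lim]]])
  moreover have "F x * (R x * cnj (R x)) = of_real (r * (\<Sum>m\<in>M. f m)) * (R x * cnj (R x)) + G x" for x
  proof -
    have "summable (\<lambda>n. norm (of_real (f (Suc n)) * e (lam (Suc n) * x)))"
      using f by (simp add: norm_mult)
    moreover have "of_real (a n) * e (lam (Suc n) * x)
        = (if Suc n \<in> M then 0 else of_real (f (Suc n)) * e (lam (Suc n) * x))" for n
      by (simp add: a_def)
    ultimately have "F x = F' x + (\<Sum>m\<in>M. of_real (f m) * e (lam m * x))"
      unfolding F F'_def using M
      by (subst suminf_Suc_split_finite) (auto intro: summable_norm_cancel)
    moreover have "e (lam m * x) * (R x * cnj (R x)) = of_real r * (R x * cnj (R x)) + e (lam m * x) * R x * cnj (R' m x)"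
      if "m \<in> M" for m
      using r M(1) that unfolding R R'_def
      by (intro mult_norm_square_geometric_factor) (auto simp: prod.remove)
    ultimately show ?thesis
      by (simp add: G_def algebra_simps sum_distrib_left sum_distrib_right sum.distrib)
  qed
  ultimately show ?thesis using that by blast
qed

theorem proposition2p1:
  fixes f :: "nat \<Rightarrow> real" and lam :: "nat \<Rightarrow> real" and \<beta> r \<delta> T :: real
    and M :: "nat set" and K :: "real \<Rightarrow> real"
    and F R :: "real \<Rightarrow> complex"
  assumes f_nonneg: "\<And>n. n \<ge> 1 \<Longrightarrow> f n \<ge> 0"
    and f_summable: "summable (\<lambda>n. f (Suc n))"
    and lam_pos: "\<And>n. n \<ge> 1 \<Longrightarrow> lam n > 0"
    and F_def: "\<And>x. F x = (\<Sum>n. of_real (f (Suc n)) * e (lam (Suc n) * x))"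
    and beta: "- (pi / 2) < \<beta>" "\<beta> < pi / 2"
    and r: "0 < r" "r < 1"
    and M: "finite M" "M \<subseteq> {1..}"
    and R_def: "\<And>t. R t = (\<Prod>m\<in>M. inverse (1 - of_real r * e (lam m * t)))"
    and K_L1: "integrable lborel K"
    and K_supp: "closure {x. K x \<noteq> 0} \<subseteq> {0..}"
    and \<delta>_pos: "\<delta> > 0"
    and K_hat: "\<And>\<xi>. Re (exp (\<i> * of_real \<beta>) * fourier K \<xi>) \<ge> \<delta> * Re (fourier K \<xi>)
                     \<and> \<delta> * Re (fourier K \<xi>) \<ge> 0"
    and T: "T \<ge> 1"
  shows "(LINT x:{0..}|lborel. Re (exp (\<i> * of_real \<beta>) * F x) * (cmod (R x))\<^sup>2 * K (x / T))
         \<ge> \<delta> * r * (\<Sum>m\<in>M. f m) * (LINT x:{0..}|lborel. (cmod (R x))\<^sup>2 * K (x / T))"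
proof -
  have T_pos: "T > 0" using T by simp
  define S where "S = (\<Sum>m\<in>M. f m)"
  have "R = (\<lambda>x. \<Prod>m\<in>M. inverse (1 - of_real r * e (lam m * x)))" using R_def by auto
  then have "nonneg_trig_limit R"
    using M(1) r by (simp add: nonneg_trig_limit_prod_geometric)
  then have P_lim: "nonneg_trig_limit (\<lambda>x. of_real ((cmod (R x))\<^sup>2))"
    unfolding complex_norm_square by (intro nonneg_trig_limit_mult nonneg_trig_limit_cnj)
  obtain G where G_lim: "nonneg_trig_limit G"
    and FP: "\<And>x. F x * of_real ((cmod (R x))\<^sup>2) = of_real (r * S) * of_real ((cmod (R x))\<^sup>2) + G x"
    using series_mult_norm_square_decomposition[OF f_nonneg f_summable F_def less_imp_le[OF r(1)] r(2) M R_def]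
    unfolding S_def complex_norm_square by blast
  have "fourier K \<xi> \<in> positivity_cone \<beta> \<delta>" for \<xi>
    using K_hat unfolding positivity_cone_def by blast
  moreover have "r * S \<ge> 0"
    unfolding S_def using r(1) M(2) f_nonneg by (auto intro!: mult_nonneg_nonneg sum_nonneg)
  ultimately show ?thesis
    using set_integral_Re_exp_mult_ge[OF K_L1 T_pos _ K_supp P_lim G_lim _ FP]
    unfolding S_def by (simp add: mult_ac)
qed

end
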